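(* Let $n,m,T$ be positive integers, $\epsilon\ge 0$, and let $x(0),\dots,x(T)\in\mathbb{R}^n$ and $u(0),\dots,u(T-1)\in\mathbb{R}^m$ be given data. For $i\in\{0,\dots,T-1\}$ let $$\mathcal{C}_i:=\{(A,B)\in\mathbb{R}^{n\times n}\times\mathbb{R}^{n\times m}:\ \exists d\in\mathbb{R}^n \text{ with } x(i+1)=Ax(i)+Bu(i)+d,\ dd^\top\preceq\epsilon I\},$$ and $\mathcal{I}:=\bigcap_{i=0}^{T-1}\mathcal{C}_i$. Suppose there exist $P\in\mathbb{R}^{n\times n}$ symmetric, $Y\in\mathbb{R}^{m\times n}$, and scalars $\beta,\tau_0,\dots,\tau_{T-1}$ with $\beta>0$, $\tau_i\ge 0$ for all $i$, $P\succ 0$, and $$\begin{bmatrix} P-\beta I & 0 & 0 & 0\\ 0 & -P & -Y^\top & 0\\ 0 & -Y & 0 & Y\\ 0 & 0 & Y^\top & P\end{bmatrix}-\sum_{i=0}^{T-1}\tau_i\begin{bmatrix} I & x(i+1)\\ 0 & -x(i)\\ 0 & -u(i)\\ 0 & 0\end{bmatrix}\begin{bmatrix}\epsilon I & 0\\ 0 & -1\end{bmatrix}\begin{bmatrix} I & x(i+1)\\ 0 & -x(i)\\ 0 & -u(i)\\ 0 & 0\end{bmatrix}^\top\succeq 0.$$ Then there exist a symmetric $P\succ 0$ and $K\in\mathbb{R}^{m\times n}$ such that $(A+BK)P(A+BK)^\top-P\prec 0$ for all $(A,B)\in\mathcal{I}$.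
   Context: $\succ$ ($\succeq$) and $\prec$ ($\preceq$) denote positive (semi)definiteness and negative (semi)definiteness of symmetric matrices. In the displayed block matrices, the block rows/columns have sizes $n,n,m,n$ (first matrix) and the $4\times 2$ block matrices have row-block sizes $n,n,m,n$ and column-block sizes $n,1$; the zero blocks and identity blocks have compatible dimensions. *)

theory Defs
  imports "HOL-Analysis.Analysis"
begin

text \<open>Matrices are HOL-Analysis matrices: real^'c^'r has rows indexed by 'r and
columns indexed by 'c. Dimensions n, m are the cardinalities of the finite types 'n, 'm.\<close>

definition psd :: "real^'k^'k \<Rightarrow> bool" where
  "psd M \<longleftrightarrow> transpose M = M \<and> (\<forall>v. 0 \<le> v \<bullet> (M *v v))"

definition pd :: "real^'k^'k \<Rightarrow> bool" where
  "pd M \<longleftrightarrow> transpose M = M \<and> (\<forall>v. v \<noteq> 0 \<longrightarrow> 0 < v \<bullet> (M *v v))"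

definition nd :: "real^'k^'k \<Rightarrow> bool" where
  "nd M \<longleftrightarrow> pd (- M)"

definition outer :: "real^'k \<Rightarrow> real^'k \<Rightarrow> real^'k^'k" where
  "outer a b = (\<chi> i j. a $ i * b $ j)"

definition Cset :: "real \<Rightarrow> (nat \<Rightarrow> real^'n) \<Rightarrow> (nat \<Rightarrow> real^'m) \<Rightarrow> nat
    \<Rightarrow> ((real^'n^'n) \<times> (real^'m^'n)) set" where
  "Cset \<epsilon> x u i = {(A, B). \<exists>d. x (Suc i) = A *v x i + B *v u i + d
                              \<and> psd (\<epsilon> *\<^sub>R mat 1 - outer d d)}"

definition Iset :: "real \<Rightarrow> (nat \<Rightarrow> real^'n) \<Rightarrow> (nat \<Rightarrow> real^'m) \<Rightarrow> nat
    \<Rightarrow> ((real^'n^'n) \<times> (real^'m^'n)) set" where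
  "Iset \<epsilon> x u T = (\<Inter>i\<in>{..<T}. Cset \<epsilon> x u i)"

text \<open>Block index type for block sizes n, n, m, n.\<close>
type_synonym ('n, 'm) blk = "'n + ('n + ('m + 'n))"

definition M0 :: "real^'n^'n \<Rightarrow> real^'n^'m \<Rightarrow> real
    \<Rightarrow> real^(('n::finite, 'm::finite) blk)^(('n, 'm) blk)" where
  "M0 P Y \<beta> = (\<chi> r c. case (r, c) of
      (Inl i, Inl j) \<Rightarrow> (P - \<beta> *\<^sub>R mat 1) $ i $ j
    | (Inr (Inl i), Inr (Inl j)) \<Rightarrow> - P $ i $ j
    | (Inr (Inl i), Inr (Inr (Inl j))) \<Rightarrow> - (transpose Y) $ i $ j
    | (Inr (Inr (Inl i)), Inr (Inl j)) \<Rightarrow> - Y $ i $ j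
    | (Inr (Inr (Inl i)), Inr (Inr (Inr j))) \<Rightarrow> Y $ i $ j
    | (Inr (Inr (Inr i)), Inr (Inr (Inl j))) \<Rightarrow> (transpose Y) $ i $ j
    | (Inr (Inr (Inr i)), Inr (Inr (Inr j))) \<Rightarrow> P $ i $ j
    | _ \<Rightarrow> 0)"

text \<open>The 4x2 block matrix [I, x(k+1); 0, -x(k); 0, -u(k); 0, 0] (column blocks n, 1).\<close>
definition Nmat :: "(nat \<Rightarrow> real^'n) \<Rightarrow> (nat \<Rightarrow> real^'m) \<Rightarrow> nat
    \<Rightarrow> real^('n + unit)^(('n::finite, 'm::finite) blk)" where
  "Nmat x u k = (\<chi> r c. case (r, c) of
      (Inl i, Inl j) \<Rightarrow> (mat 1 :: real^'n^'n) $ i $ j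
    | (Inl i, Inr _) \<Rightarrow> x (Suc k) $ i
    | (Inr (Inl i), Inr _) \<Rightarrow> - x k $ i
    | (Inr (Inr (Inl i)), Inr _) \<Rightarrow> - u k $ i
    | _ \<Rightarrow> 0)"

definition Mid :: "real \<Rightarrow> real^('n::finite + unit)^('n + unit)" where
  "Mid \<epsilon> = (\<chi> r c. case (r, c) of
      (Inl i, Inl j) \<Rightarrow> \<epsilon> * (mat 1 :: real^'n^'n) $ i $ j
    | (Inr _, Inr _) \<Rightarrow> -1
    | _ \<Rightarrow> 0)"

end

theory Submission
  imports Defs
begin

(* Take P' = P and K = Y P^-1, so that Y = K P. For (A, B) consistent with
   the data and w <> 0, put y = (A + B K)^T w and test the matrix inequality at the block
   vector v = (w, A^T w, B^T w, -K^T B^T w). The first block matrix contributes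
   w^T P w - beta |w|^2 - y^T P y. Each subtracted term contributes
   tau_i (eps |w|^2 - (d_i . w)^2) >= 0, where d_i is the disturbance explaining the i-th
   transition. Hence y^T P y <= w^T P w - beta |w|^2 < w^T P w (an S-procedure argument). *)

lemma sum_UNIV_Plus:
  "(\<Sum>z\<in>UNIV. f z) = (\<Sum>a\<in>UNIV. f (Inl a)) + (\<Sum>b\<in>UNIV. f (Inr b))"
  for f :: "'a::finite + 'b::finite \<Rightarrow> 'c::comm_monoid_add"
  by (subst UNIV_Plus_UNIV[symmetric], subst sum.Plus) (auto simp: comp_def)

lemma inner_matrix_vector_eq_sum:
  "(v::real^'k) \<bullet> (M *v w) = (\<Sum>i\<in>UNIV. \<Sum>j\<in>UNIV. v$i * M$i$j * w$j)"
  by (simp add: inner_vec_def matrix_vector_mult_def sum_distrib_left mult.assoc)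

lemma inner_matrix_vector_transpose:
  "(x::real^'n) \<bullet> (M *v y) = y \<bullet> (transpose M *v x)"
  by (metis dot_lmul_matrix inner_commute transpose_matrix_vector)

lemma inner_congruence:
  "(v::real^'k) \<bullet> ((N ** D ** transpose N) *v v) = (transpose N *v v) \<bullet> (D *v (transpose N *v v))"
  by (metis dot_lmul_matrix matrix_vector_mul_assoc transpose_matrix_vector)

lemma matrix_vector_mult_sum_left:
  "(sum f S) *v (v::real^'k) = (\<Sum>i\<in>S. f i *v v)"
  unfolding vec_eq_iff matrix_vector_mult_def sum_component sum_distrib_right
  by (simp add: sum_component) (intro allI sum.swap)

lemma transpose_add: "transpose (X + Y) = transpose X + transpose (Y::real^'n^'m)"
  by (simp add: vec_eq_iff transpose_def)

lemma transpose_diff: "transpose (X - Y) = transpose X - transpose (Y::real^'n^'m)"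
  by (simp add: vec_eq_iff transpose_def)

lemma quadratic_form_outer: "w \<bullet> (outer d d *v w) = (d \<bullet> (w::real^'n))\<^sup>2"
  unfolding inner_matrix_vector_eq_sum
  by (simp add: outer_def inner_vec_def power2_eq_square sum_distrib_left sum_distrib_right mult_ac)

lemma psd_scaled_identity_minus_outer_imp:
  assumes "psd (e *\<^sub>R mat 1 - outer d d)"
  shows "(d \<bullet> w)\<^sup>2 \<le> e * (w \<bullet> (w::real^'n))"
proof -
  have "0 \<le> w \<bullet> ((e *\<^sub>R mat 1 - outer d d) *v w)"
    using assms unfolding psd_def by blast
  then show ?thesis
    by (simp add: matrix_vector_mult_diff_rdistrib inner_diff_right quadratic_form_outer
        scaleR_matrix_vector_assoc[symmetric])
qed

lemma pd_imp_left_invertible: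
  assumes "pd (P::real^'n^'n)"
  obtains Q where "Q ** P = mat 1"
proof -
  have "z = 0" if "P *v z = 0" for z
    using assms that unfolding pd_def by force
  then show ?thesis
    using that matrix_left_invertible_ker by blast
qed

lemma nd_Stein_iff:
  assumes "transpose P = P"
  shows "nd (E ** P ** transpose E - P) \<longleftrightarrow>
    (\<forall>w. w \<noteq> 0 \<longrightarrow> (transpose E *v w) \<bullet> (P *v (transpose E *v w)) < w \<bullet> (P *v (w::real^'n)))"
proof -
  have "- (E ** P ** transpose E - P) = P - E ** P ** transpose E"
    by simp
  moreover have "transpose (P - E ** P ** transpose E) = P - E ** P ** transpose E"
    using assms by (simp add: transpose_diff matrix_transpose_mul matrix_mul_assoc)
  ultimately show ?thesis
    by (simp add: nd_def pd_def matrix_vector_mult_diff_rdistrib inner_diff_right inner_congruence)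
qed

lemma psd_diff_sum_imp_quadratic_form_nonneg:
  assumes "psd (M - (\<Sum>i\<in>S. \<tau> i *\<^sub>R N i))"
    and "\<forall>i\<in>S. 0 \<le> \<tau> i" and "\<forall>i\<in>S. 0 \<le> v \<bullet> (N i *v v)"
  shows "0 \<le> v \<bullet> (M *v (v::real^'k))"
proof -
  have "0 \<le> v \<bullet> ((M - (\<Sum>i\<in>S. \<tau> i *\<^sub>R N i)) *v v)"
    using assms(1) unfolding psd_def by blast
  also have "\<dots> = v \<bullet> (M *v v) - (\<Sum>i\<in>S. \<tau> i * (v \<bullet> (N i *v v)))"
    by (simp add: matrix_vector_mult_diff_rdistrib inner_diff_right matrix_vector_mult_sum_left
        inner_sum_right scaleR_matrix_vector_assoc[symmetric])
  finally show ?thesis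
    using sum_nonneg[of S "\<lambda>i. \<tau> i * (v \<bullet> (N i *v v))"] assms(2,3) by auto
qed

definition block_vec4 :: "real^'n \<Rightarrow> real^'n \<Rightarrow> real^'m \<Rightarrow> real^'n
    \<Rightarrow> real^(('n::finite, 'm::finite) blk)" where
  "block_vec4 w1 w2 w3 w4 = (\<chi> r. case r of
      Inl i \<Rightarrow> w1$i | Inr (Inl i) \<Rightarrow> w2$i | Inr (Inr (Inl i)) \<Rightarrow> w3$i | Inr (Inr (Inr i)) \<Rightarrow> w4$i)"

definition block_vec2 :: "real^'n \<Rightarrow> real \<Rightarrow> real^('n::finite + unit)" where
  "block_vec2 a s = (\<chi> c. case c of Inl j \<Rightarrow> a$j | Inr _ \<Rightarrow> s)"

lemma M0_quadratic_form:
  "block_vec4 w1 w2 w3 w4 \<bullet> (M0 P Y \<beta> *v block_vec4 w1 w2 w3 w4) =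
     w1 \<bullet> ((P - \<beta> *\<^sub>R mat 1) *v w1) - w2 \<bullet> (P *v w2) - w2 \<bullet> (transpose Y *v w3)
     - w3 \<bullet> (Y *v w2) + w3 \<bullet> (Y *v w4) + w4 \<bullet> (transpose Y *v w3) + w4 \<bullet> (P *v w4)"
  unfolding inner_matrix_vector_eq_sum
  by (simp only: sum_UNIV_Plus M0_def block_vec4_def vec_lambda_beta sum.case prod.case)
    (simp add: sum_negf sum.distrib sum_subtractf)

lemma sum_times_indicator_eq: "(\<Sum>j\<in>UNIV. (f j::real) * (if j = a then 1 else 0)) = f a"
  for a :: "'a::finite"
  by (simp add: if_distrib[of "\<lambda>z. _ * z"] cong: if_cong)

lemma transpose_Nmat_block_vec4:
  fixes x :: "nat \<Rightarrow> real^'n::finite" and u :: "nat \<Rightarrow> real^'m::finite"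
  shows
  "transpose (Nmat x u k) *v block_vec4 w1 w2 w3 w4 =
     block_vec2 w1 (x (Suc k) \<bullet> w1 - x k \<bullet> w2 - u k \<bullet> w3)"
  unfolding vec_eq_iff
proof
  fix c :: "'n + unit"
  show "(transpose (Nmat x u k) *v block_vec4 w1 w2 w3 w4) $ c =
      block_vec2 w1 (x (Suc k) \<bullet> w1 - x k \<bullet> w2 - u k \<bullet> w3) $ c"
    by (cases c) (simp_all add: matrix_vector_mult_def transpose_def sum_UNIV_Plus Nmat_def
        block_vec4_def block_vec2_def mat_def inner_vec_def sum_negf sum_times_indicator_eq
        mult.commute[of "if _ then 1 else 0"])
qed

lemma Mid_quadratic_form: "block_vec2 a s \<bullet> (Mid \<epsilon> *v block_vec2 a s) = \<epsilon> * (a \<bullet> a) - s\<^sup>2"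
  unfolding inner_matrix_vector_eq_sum
  by (simp add: sum_UNIV_Plus Mid_def block_vec2_def mat_def inner_vec_def power2_eq_square)
    (simp add: sum_distrib_left if_distrib[of "\<lambda>z. _ * z"] if_distrib[of "\<lambda>z. z * _"]
      mult_ac cong: if_cong)

lemma Nmat_quadratic_form:
  "v \<bullet> ((Nmat x u k ** Mid \<epsilon> ** transpose (Nmat x u k)) *v v) =
     \<epsilon> * (w1 \<bullet> w1) - (x (Suc k) \<bullet> w1 - x k \<bullet> w2 - u k \<bullet> w3)\<^sup>2"
  if "v = block_vec4 w1 w2 w3 w4"
  unfolding that inner_congruence transpose_Nmat_block_vec4 Mid_quadratic_form ..

(* The residual is d \<bullet> w for the disturbance d of the i-th transition. *)

lemma Cset_residual_bound:
  assumes "(A, B) \<in> Cset \<epsilon> x u i"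
  shows "(x (Suc i) \<bullet> w - x i \<bullet> (transpose A *v w) - u i \<bullet> (transpose B *v w))\<^sup>2 \<le> \<epsilon> * (w \<bullet> w)"
proof -
  obtain d where d: "x (Suc i) = A *v x i + B *v u i + d"
    and psd: "psd (\<epsilon> *\<^sub>R mat 1 - outer d d)"
    using assms unfolding Cset_def by auto
  have "x (Suc i) \<bullet> w - x i \<bullet> (transpose A *v w) - u i \<bullet> (transpose B *v w) = d \<bullet> w"
    unfolding d inner_matrix_vector_transpose[of w A, symmetric]
      inner_matrix_vector_transpose[of w B, symmetric]
    by (simp add: inner_add_right inner_commute)
  with psd_scaled_identity_minus_outer_imp[OF psd] show ?thesis
    by simp
qed

lemma M0_quadratic_form_closed_loop:
  fixes A :: "real^'n^'n" and B :: "real^'m^'n" and w :: "real^'n"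
  assumes "transpose P = P" and "K ** P = Y"
  defines "v \<equiv> block_vec4 w (transpose A *v w) (transpose B *v w) (- (transpose (B ** K) *v w))"
    and "y \<equiv> transpose (A + B ** K) *v w"
  shows "v \<bullet> (M0 P Y \<beta> *v v) = w \<bullet> (P *v w) - \<beta> * (w \<bullet> w) - y \<bullet> (P *v y)"
proof -
  define a where "a = transpose A *v w"
  define b where "b = transpose B *v w"
  define h where "h = transpose K *v b"
  have h: "transpose (B ** K) *v w = h"
    unfolding h_def b_def by (simp only: matrix_transpose_mul matrix_vector_mul_assoc)
  have y: "y = a + h"
    unfolding y_def a_def b_def h_def
    by (simp only: transpose_add matrix_transpose_mul matrix_vector_mult_add_rdistrib
        matrix_vector_mul_assoc)
  have Ytb: "transpose Y *v b = P *v h"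
    unfolding h_def using assms(1,2)
    by (metis matrix_transpose_mul matrix_vector_mul_assoc)
  have bY: "b \<bullet> (Y *v z) = z \<bullet> (P *v h)" for z
    using inner_matrix_vector_transpose[of b Y z] Ytb by simp
  have hPa: "h \<bullet> (P *v a) = a \<bullet> (P *v h)"
    using inner_matrix_vector_transpose[of h P a] assms(1) by simp
  have yPy: "y \<bullet> (P *v y) = a \<bullet> (P *v a) + 2 * (a \<bullet> (P *v h)) + h \<bullet> (P *v h)"
    unfolding y by (simp add: matrix_vector_right_distrib inner_add_left inner_add_right hPa)
  have "w \<bullet> ((P - \<beta> *\<^sub>R mat 1) *v w) = w \<bullet> (P *v w) - \<beta> * (w \<bullet> w)"
    by (simp add: matrix_vector_mult_diff_rdistrib inner_diff_right
        scaleR_matrix_vector_assoc[symmetric])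
  then show ?thesis
    unfolding v_def a_def[symmetric] b_def[symmetric] h M0_quadratic_form yPy
    by (simp add: Ytb bY vec.neg del: transpose_matrix_vector)
qed

lemma closed_loop_Lyapunov_decrease:
  fixes x :: "nat \<Rightarrow> real^'n" and u :: "nat \<Rightarrow> real^'m" and w :: "real^'n"
  assumes LMI: "psd (M0 P Y \<beta> - (\<Sum>i<T. \<tau> i *\<^sub>R
            (Nmat x u i ** Mid \<epsilon> ** transpose (Nmat x u i))))"
    and "\<forall>i<T. \<tau> i \<ge> 0" and "transpose P = P" and "K ** P = Y"
    and "(A, B) \<in> Iset \<epsilon> x u T"
  defines "y \<equiv> transpose (A + B ** K) *v w"
  shows "y \<bullet> (P *v y) \<le> w \<bullet> (P *v w) - \<beta> * (w \<bullet> w)"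
proof -
  define v where "v = block_vec4 w (transpose A *v w) (transpose B *v w)
    (- (transpose (B ** K) *v w))"
  have "0 \<le> v \<bullet> ((Nmat x u i ** Mid \<epsilon> ** transpose (Nmat x u i)) *v v)" if "i < T" for i
  proof -
    have "(A, B) \<in> Cset \<epsilon> x u i"
      using assms(5) that unfolding Iset_def by blast
    then show ?thesis
      using Cset_residual_bound Nmat_quadratic_form[OF v_def] by simp
  qed
  then have "0 \<le> v \<bullet> (M0 P Y \<beta> *v v)"
    using psd_diff_sum_imp_quadratic_form_nonneg[OF LMI] assms(2) by blast
  then show ?thesis
    unfolding v_def y_def M0_quadratic_form_closed_loop[OF assms(3,4)] by simp
qed

theorem proposition1:
  fixes x :: "nat \<Rightarrow> real^'n" and u :: "nat \<Rightarrow> real^'m"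
    and T :: nat and \<epsilon> :: real
    and P :: "real^'n^'n" and Y :: "real^'n^'m" and \<beta> :: real and \<tau> :: "nat \<Rightarrow> real"
  assumes "T > 0" and "\<epsilon> \<ge> 0"
    and "transpose P = P" and "\<beta> > 0" and "\<forall>i<T. \<tau> i \<ge> 0" and "pd P"
    and "psd (M0 P Y \<beta> - (\<Sum>i<T. \<tau> i *\<^sub>R
            (Nmat x u i ** Mid \<epsilon> ** transpose (Nmat x u i))))"
  shows "\<exists>P' :: real^'n^'n. \<exists>K :: real^'n^'m. transpose P' = P' \<and> pd P' \<and>
           (\<forall>(A, B) \<in> Iset \<epsilon> x u T.
              nd ((A + B ** K) ** P' ** transpose (A + B ** K) - P'))"
proof -
  obtain Q where "Q ** P = mat 1"
    using pd_imp_left_invertible[OF assms(6)] .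
  define K where "K = Y ** Q"
  have KP: "K ** P = Y"
    unfolding K_def by (metis \<open>Q ** P = mat 1\<close> matrix_mul_assoc matrix_mul_rid)
  have "nd ((A + B ** K) ** P ** transpose (A + B ** K) - P)"
    if "(A, B) \<in> Iset \<epsilon> x u T" for A B
    unfolding nd_Stein_iff[OF assms(3)]
  proof (intro allI impI)
    fix w :: "real^'n"
    assume "w \<noteq> 0"
    with assms(4) have "0 < \<beta> * (w \<bullet> w)"
      by simp
    with closed_loop_Lyapunov_decrease[OF assms(7,5,3) KP that, of w] show
      "(transpose (A + B ** K) *v w) \<bullet> (P *v (transpose (A + B ** K) *v w)) < w \<bullet> (P *v w)"
      by linarith
  qed
  then show ?thesis
    using assms(3,6) by blast
qed

end
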